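(* Let $k\ge2$, $r_0>0$, and let $\mathfrak X\subset\mathbb R^k$ be a polar-coordinate grid: choose $M$ points $q_1,\dots,q_M$ on the sphere of radius $r_0$ centered at the origin, containing $k-1$ linearly independent vectors, and radii $0<\mathsf r_1<\dots<\mathsf r_\alpha=r_0$, and let $\mathfrak X=\{(\mathsf r_a/r_0)q_m: 1\le a\le\alpha,1\le m\le M\}$, so $p=M\alpha$ points. Let $\mathcal T^{(k)}_{\mathrm{exact}}$ be the set of rotations $\mathtt O\in SO(k)$ mapping $\mathfrak X$ onto itself, and $\mathcal T_{\mathrm{exact}}$ the set of their companion $p\times p$ matrices. Then $$|\mathcal T^{(k)}_{\mathrm{exact}}|=|\mathcal T_{\mathrm{exact}}|=O(p^{k-1}),$$ and the elements of $\mathcal T_{\mathrm{exact}}$ are permutation matrices; in particular they are orthogonal.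
   Context: An image on the grid is a vector $v\in\mathbb R^p$ whose entries are values at the grid points $x_1,\dots,x_p$. For a rotation $\mathtt O$ mapping $\mathfrak X$ onto itself, its companion matrix is the $p\times p$ matrix $P_{\mathtt O}$ with $(P_{\mathtt O}v)_a=v_b$ where $x_b=\mathtt O^{-1}x_a$, i.e. the matrix implementing the action $v\mapsto\mathtt O\circ v$ of the rotation on discretized images. $O(p^{k-1})$ refers to $p\to\infty$ with $k$ fixed (in fact the proof gives $|\mathcal T^{(k)}_{\mathrm{exact}}|\le M^{k-1}$). *)

theory Defs
  imports "HOL-Analysis.Analysis" "HOL-Combinatorics.Permutations"
begin

text \<open>This fixes an enumeration x_1, ..., x_p of the grid.\<close>
definition grid_point :: "nat \<Rightarrow> real \<Rightarrow> (nat \<Rightarrow> real) \<Rightarrow> (nat \<Rightarrow> real^'n) \<Rightarrow> nat \<Rightarrow> real^'n" where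
  "grid_point M r0 rr q j = (rr (j div M) / r0) *\<^sub>R q (j mod M)"

definition grid :: "nat \<Rightarrow> nat \<Rightarrow> real \<Rightarrow> (nat \<Rightarrow> real) \<Rightarrow> (nat \<Rightarrow> real^'n) \<Rightarrow> (real^'n) set" where
  "grid M alpha r0 rr q = grid_point M r0 rr q ` {..<M * alpha}"

definition polar_grid_data :: "nat \<Rightarrow> nat \<Rightarrow> real \<Rightarrow> (nat \<Rightarrow> real) \<Rightarrow> (nat \<Rightarrow> real^'n) \<Rightarrow> bool" where
  "polar_grid_data M alpha r0 rr q \<longleftrightarrow>
     r0 > 0 \<and> alpha \<ge> 1 \<and>
     inj_on q {..<M} \<and> (\<forall>m<M. norm (q m) = r0) \<and>
     (\<exists>S \<subseteq> q ` {..<M}. card S = CARD('n) - 1 \<and> independent S) \<and>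
     0 < rr 0 \<and> (\<forall>a b. a < b \<and> b < alpha \<longrightarrow> rr a < rr b) \<and> rr (alpha - 1) = r0"

definition rotation :: "real^'n^'n \<Rightarrow> bool" where
  "rotation A \<longleftrightarrow> orthogonal_matrix A \<and> det A = 1"

definition T_exact_k :: "nat \<Rightarrow> nat \<Rightarrow> real \<Rightarrow> (nat \<Rightarrow> real) \<Rightarrow> (nat \<Rightarrow> real^'n) \<Rightarrow> (real^'n^'n) set" where
  "T_exact_k M alpha r0 rr q =
     {A. rotation A \<and> (\<lambda>x. A *v x) ` grid M alpha r0 rr q = grid M alpha r0 rr q}"

text \<open>Companion p x p matrix (indices 0..p-1, zero outside):
  (P v)_a = v_b where x_b = O^{-1} x_a.\<close>
definition companion :: "nat \<Rightarrow> real \<Rightarrow> (nat \<Rightarrow> real) \<Rightarrow> (nat \<Rightarrow> real^'n) \<Rightarrow> nat \<Rightarrow> real^'n^'n \<Rightarrow> (nat \<Rightarrow> nat \<Rightarrow> real)" where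
  "companion M r0 rr q p A = (\<lambda>a b.
     if a < p \<and> b < p \<and> grid_point M r0 rr q b = matrix_inv A *v grid_point M r0 rr q a then 1 else 0)"

definition T_exact :: "nat \<Rightarrow> nat \<Rightarrow> real \<Rightarrow> (nat \<Rightarrow> real) \<Rightarrow> (nat \<Rightarrow> real^'n) \<Rightarrow> (nat \<Rightarrow> nat \<Rightarrow> real) set" where
  "T_exact M alpha r0 rr q = companion M r0 rr q (M * alpha) ` T_exact_k M alpha r0 rr q"

definition permutation_matrix :: "nat \<Rightarrow> (nat \<Rightarrow> nat \<Rightarrow> real) \<Rightarrow> bool" where
  "permutation_matrix p P \<longleftrightarrow>
     (\<exists>\<sigma>. \<sigma> permutes {..<p} \<and> (\<forall>i<p. \<forall>j<p. P i j = (if j = \<sigma> i then 1 else 0)))"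

definition orthogonal_mat :: "nat \<Rightarrow> (nat \<Rightarrow> nat \<Rightarrow> real) \<Rightarrow> bool" where
  "orthogonal_mat p P \<longleftrightarrow>
     (\<forall>i<p. \<forall>j<p. (\<Sum>l<p. P l i * P l j) = (if i = j then 1 else 0)) \<and>
     (\<forall>i<p. \<forall>j<p. (\<Sum>l<p. P i l * P j l) = (if i = j then 1 else 0))"

end

theory Submission
  imports Defs
begin

text \<open>A rotation that fixes a hyperplane pointwise is the identity: it maps the normal line to
  itself, hence acts on it by a scalar, and that scalar is its determinant. Consequently a rotation
  is determined by its values on k - 1 independent vectors. A rotation preserving the grid
  preserves norms, so it permutes the outer shell q_1, ..., q_M; it is therefore
  determined by where it sends k - 1 independent directions among the M, which
  leaves at most M^(k-1) \<le> p^(k-1) possibilities. Its companion matrix is the permutation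
  matrix of the induced permutation of grid indices, and it determines the rotation on the outer
  shell, so passing to companion matrices does not change the count.\<close>

lemma rotation_iff_rotation_matrix: "rotation A \<longleftrightarrow> rotation_matrix A"
  by (simp add: rotation_def rotation_matrix_def)

lemma orthogonal_matrix_inner:
  fixes Q :: "real^'n^'n"
  assumes "orthogonal_matrix Q"
  shows "(Q *v x) \<bullet> (Q *v y) = x \<bullet> y"
  using assms orthogonal_transformation_matrix[of "(*v) Q"]
  by (simp add: orthogonal_transformation_def)

lemma orthogonal_matrix_norm:
  fixes Q :: "real^'n^'n"
  assumes "orthogonal_matrix Q"
  shows "norm (Q *v x) = norm x"
  using orthogonal_matrix_inner[OF assms, of x x] by (simp add: norm_eq_sqrt_inner)

lemma matrix_inv_orthogonal:
  fixes A :: "real^'n^'n"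
  assumes "orthogonal_matrix A"
  shows "matrix_inv A = transpose A"
proof -
  have At: "A ** transpose A = mat 1 \<and> transpose A ** A = mat 1"
    using assms by (simp add: orthogonal_matrix_def)
  then have Ai: "A ** matrix_inv A = mat 1 \<and> matrix_inv A ** A = mat 1"
    unfolding matrix_inv_def by (rule someI)
  have "matrix_inv A = (matrix_inv A ** A) ** transpose A"
    using At by (metis matrix_mul_assoc matrix_mul_rid)
  then show ?thesis
    using Ai by (simp add: matrix_mul_lid)
qed

lemma rotation_matrix_transpose: "rotation_matrix A \<Longrightarrow> rotation_matrix (transpose A)"
  by (simp add: rotation_matrix_def det_transpose)

lemma rotation_matrix_mul:
  fixes A B :: "real^'n^'n"
  shows "rotation_matrix A \<Longrightarrow> rotation_matrix B \<Longrightarrow> rotation_matrix (A ** B)"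
  by (simp add: rotation_matrix_def orthogonal_matrix_mul det_mul)

text \<open>The column D e_k is orthogonal to the fixed columns, so D is
  diagonal with entries 1 except possibly at (k, k); that entry is det D.\<close>

lemma rotation_matrix_fixing_coordinate_hyperplane:
  fixes D :: "real^'n^'n"
  assumes rot: "rotation_matrix D" and fixed: "\<And>v. v $ k = 0 \<Longrightarrow> D *v v = v"
  shows "D = mat 1"
proof -
  have orth: "orthogonal_matrix D" and det: "det D = 1"
    using rot by (auto simp: rotation_matrix_def)
  have column: "D $ i $ j = (D *v axis j 1) $ i" for i j
    by (simp add: matrix_vector_mult_basis column_def)
  have fixed_column: "D *v axis j 1 = axis j 1" if "j \<noteq> k" for j
    using fixed that by (simp add: axis_def)
  have last_column: "(D *v axis k 1) $ j = 0" if "j \<noteq> k" for j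
  proof -
    have "(D *v axis k 1) $ j = (D *v axis k 1) \<bullet> (D *v axis j 1)"
      using fixed_column[OF that] by (simp add: inner_axis)
    also have "\<dots> = axis k 1 \<bullet> axis j (1::real)"
      by (rule orthogonal_matrix_inner[OF orth])
    also have "\<dots> = 0"
      using that by (simp add: inner_axis_axis)
    finally show ?thesis .
  qed
  define c where "c = D $ k $ k"
  have entries: "D $ i $ j = (if i = j then if j = k then c else 1 else 0)" for i j
    using fixed_column[of j] last_column[of i] by (auto simp: column c_def axis_def)
  have "det D = (\<Prod>i\<in>UNIV. D $ i $ i)"
    by (rule det_diagonal) (simp add: entries)
  also have "\<dots> = c"
    by (simp add: entries prod.If_cases)
  finally have "c = 1"
    using det by simp
  then show ?thesis
    by (simp add: vec_eq_iff entries mat_def)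
qed

text \<open>Conjugation by an orthogonal Q with Q e_k = a / norm a reduces this to the coordinate case.\<close>

lemma rotation_matrix_fixing_hyperplane:
  fixes C :: "real^'n^'n"
  assumes rot: "rotation_matrix C" and "a \<noteq> 0" and fixed: "\<And>x. a \<bullet> x = 0 \<Longrightarrow> C *v x = x"
  shows "C = mat 1"
proof -
  fix k :: 'n
  obtain Q where Q: "orthogonal_matrix Q" and Qk: "Q *v axis k 1 = a /\<^sub>R norm a"
    using orthogonal_matrix_exists_basis[of "a /\<^sub>R norm a"] \<open>a \<noteq> 0\<close> by auto
  have QQt: "Q ** transpose Q = mat 1" "transpose Q ** Q = mat 1"
    using Q by (auto simp: orthogonal_matrix_def)
  let ?D = "transpose Q ** C ** Q"
  have "det Q * det Q = 1"
    using det_orthogonal_matrix[OF Q] by auto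
  then have "rotation_matrix ?D"
    using rot Q by (simp add: rotation_matrix_def orthogonal_matrix_mul det_mul det_transpose)
  moreover have "?D *v v = v" if "v $ k = 0" for v
  proof -
    have "(a /\<^sub>R norm a) \<bullet> (Q *v v) = axis k 1 \<bullet> v"
      using orthogonal_matrix_inner[OF Q, of "axis k 1" v] Qk by simp
    then have "a \<bullet> (Q *v v) = 0"
      using that \<open>a \<noteq> 0\<close> by (simp add: inner_axis')
    then have "C *v (Q *v v) = Q *v v"
      by (rule fixed)
    then show ?thesis
      by (metis QQt(2) matrix_vector_mul_assoc matrix_vector_mul_lid)
  qed
  ultimately have "?D = mat 1"
    by (rule rotation_matrix_fixing_coordinate_hyperplane)
  then show ?thesis
    using QQt by (metis matrix_mul_assoc matrix_mul_lid matrix_mul_rid)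
qed

lemma rotation_matrix_eq_on_independent:
  fixes A B :: "real^'n^'n"
  assumes rA: "rotation_matrix A" and rB: "rotation_matrix B"
    and ind: "independent S" and card: "card S = CARD('n) - 1"
    and eq: "\<And>s. s \<in> S \<Longrightarrow> A *v s = B *v s"
  shows "A = B"
proof -
  have BtB: "transpose B ** B = mat 1"
    using rB by (simp add: rotation_matrix_def orthogonal_matrix_def)
  have "dim S = DIM(real^'n) - 1"
    using ind card by (simp add: dim_eq_card_independent)
  then obtain a where "a \<noteq> 0" and span: "span S = {x. a \<bullet> x = 0}"
    by (rule lowdim_eq_hyperplane)
  have "(transpose B ** A) *v s = s" if "s \<in> S" for s
    by (metis BtB eq[OF that] matrix_vector_mul_assoc matrix_vector_mul_lid)
  then have fixes_hyperplane: "(transpose B ** A) *v x = x" if "a \<bullet> x = 0" for x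
    using linear_eq_on_span[of "(*v) (transpose B ** A)" id S x] that span
    by (auto simp: linear_id)
  have "rotation_matrix (transpose B ** A)"
    using rA rB by (simp add: rotation_matrix_mul rotation_matrix_transpose)
  then have "transpose B ** A = mat 1"
    using \<open>a \<noteq> 0\<close> fixes_hyperplane by (rule rotation_matrix_fixing_hyperplane)
  then have "B ** (transpose B ** A) = B"
    by simp
  then show ?thesis
    using rB by (simp add: matrix_mul_assoc rotation_matrix_def orthogonal_matrix_def matrix_mul_lid)
qed

lemma permutation_matrix_orthogonal:
  assumes "permutation_matrix p P"
  shows "orthogonal_mat p P"
proof -
  obtain \<sigma> where \<sigma>: "\<sigma> permutes {..<p}"
    and P: "\<And>i j. i < p \<Longrightarrow> j < p \<Longrightarrow> P i j = (if j = \<sigma> i then 1 else 0)"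
    using assms by (auto simp: permutation_matrix_def)
  have columns: "(\<Sum>l<p. P l i * P l j) = (if i = j then 1 else 0)" if "i < p" "j < p" for i j
  proof -
    have "(\<Sum>l<p. P l i * P l j) = (\<Sum>l<p. if l = inv \<sigma> i then (if i = j then 1 else 0) else 0)"
      using P that permutes_inv_eq[OF \<sigma>, of i] permutes_inverses[OF \<sigma>]
      by (intro sum.cong) auto
    also have "\<dots> = (if i = j then 1 else 0)"
      using permutes_in_image[OF permutes_inv[OF \<sigma>], of i] that by simp
    finally show ?thesis .
  qed
  have rows: "(\<Sum>l<p. P i l * P j l) = (if i = j then 1 else 0)" if "i < p" "j < p" for i j
  proof -
    have inj: "\<sigma> i = \<sigma> j \<longleftrightarrow> i = j"
      using permutes_inj[OF \<sigma>] by (auto dest: injD)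
    have "(\<Sum>l<p. P i l * P j l) = (\<Sum>l<p. if l = \<sigma> i then (if i = j then 1 else 0) else 0)"
      using P that inj by (intro sum.cong) auto
    also have "\<dots> = (if i = j then 1 else 0)"
      using permutes_in_image[OF \<sigma>, of i] that by simp
    finally show ?thesis .
  qed
  show ?thesis
    unfolding orthogonal_mat_def using columns rows by blast
qed

lemma permutation_matrix_of_bijection_on_image:
  assumes inj: "inj_on g {..<p}" and onto: "f ` g ` {..<p} = g ` {..<p}"
  shows "permutation_matrix p (\<lambda>a b. if a < p \<and> b < p \<and> g b = f (g a) then 1 else 0)"
proof -
  define \<sigma> where "\<sigma> i = (if i < p then inv_into {..<p} g (f (g i)) else i)" for i
  have \<sigma>: "\<sigma> i < p \<and> g (\<sigma> i) = f (g i)" if "i < p" for i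
  proof -
    have "f (g i) \<in> g ` {..<p}"
      using onto that by blast
    then show ?thesis
      using that inv_into_into[of "f (g i)" g "{..<p}"] by (simp add: \<sigma>_def f_inv_into_f)
  qed
  have "\<sigma> ` {..<p} = inv_into {..<p} g ` f ` g ` {..<p}"
    by (auto simp: \<sigma>_def image_image)
  also have "\<dots> = {..<p}"
    using inj by (simp add: onto inv_into_image_cancel)
  finally have "bij_betw \<sigma> {..<p} {..<p}"
    by (simp add: bij_betw_def eq_card_imp_inj_on)
  then have "\<sigma> permutes {..<p}"
    by (rule bij_imp_permutes) (simp add: \<sigma>_def)
  moreover have "g j = f (g i) \<longleftrightarrow> j = \<sigma> i" if "i < p" "j < p" for i j
    using \<sigma>[OF that(1)] that(2) inj by (metis inj_onD lessThan_iff)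
  ultimately show ?thesis
    unfolding permutation_matrix_def by auto
qed

lemma card_le_power_if_inj_on_restrict:
  assumes inj: "inj_on (\<lambda>x. restrict (h x) S) T" and "finite S" "finite Q"
    and into: "\<And>x s. x \<in> T \<Longrightarrow> s \<in> S \<Longrightarrow> h x s \<in> Q"
  shows "finite T" "card T \<le> card Q ^ card S"
proof -
  have sub: "(\<lambda>x. restrict (h x) S) ` T \<subseteq> PiE S (\<lambda>_. Q)"
    using into by auto
  have fin: "finite (PiE S (\<lambda>_. Q))"
    using assms by (simp add: finite_PiE)
  show "finite T"
    using finite_subset[OF sub fin] inj finite_imageD by blast
  have "card T = card ((\<lambda>x. restrict (h x) S) ` T)"
    using inj by (simp add: card_image)
  also have "\<dots> \<le> card (PiE S (\<lambda>_. Q))"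
    by (rule card_mono[OF fin sub])
  finally show "card T \<le> card Q ^ card S"
    using \<open>finite S\<close> by (simp add: card_PiE)
qed

context
  fixes M alpha r0 rr and q :: "nat \<Rightarrow> real^'n"
  assumes polar: "polar_grid_data M alpha r0 rr q"
begin

lemma polar_grid_radius_pos: "a < alpha \<Longrightarrow> 0 < rr a"
  using polar unfolding polar_grid_data_def by (metis gr0I less_trans)

lemma polar_grid_radius_eq_iff: "a < alpha \<Longrightarrow> b < alpha \<Longrightarrow> rr a = rr b \<longleftrightarrow> a = b"
  using polar unfolding polar_grid_data_def by (metis less_irrefl nat_neq_iff)

lemma grid_index_bounds:
  assumes "j < M * alpha"
  shows "j div M < alpha" "j mod M < M"
proof -
  have "M > 0"
    using assms by (cases M) auto
  then show "j div M < alpha" "j mod M < M"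
    using assms by (auto simp: div_less_iff_less_mult mult.commute)
qed

lemma norm_grid_point:
  assumes "j < M * alpha"
  shows "norm (grid_point M r0 rr q j) = rr (j div M)"
  using polar polar_grid_radius_pos[OF grid_index_bounds(1)[OF assms]] grid_index_bounds(2)[OF assms]
  by (simp add: polar_grid_data_def grid_point_def)

lemma inj_on_grid_point: "inj_on (grid_point M r0 rr q) {..<M * alpha}"
proof
  fix a b assume "a \<in> {..<M * alpha}" "b \<in> {..<M * alpha}"
    and eq: "grid_point M r0 rr q a = grid_point M r0 rr q b"
  then have a: "a < M * alpha" and b: "b < M * alpha"
    by auto
  then have "rr (a div M) = rr (b div M)"
    using norm_grid_point eq by metis
  then have div: "a div M = b div M"
    using polar_grid_radius_eq_iff grid_index_bounds a b by auto
  moreover have "rr (a div M) / r0 \<noteq> 0"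
    using polar_grid_radius_pos[OF grid_index_bounds(1)[OF a]] polar by (simp add: polar_grid_data_def)
  ultimately have "q (a mod M) = q (b mod M)"
    using eq by (simp add: grid_point_def)
  then have "a mod M = b mod M"
    using polar grid_index_bounds a b by (auto simp: polar_grid_data_def dest: inj_onD)
  with div show "a = b"
    by (metis div_mult_mod_eq)
qed

lemma grid_point_outer_shell:
  assumes "m < M"
  shows "(alpha - 1) * M + m < M * alpha" "grid_point M r0 rr q ((alpha - 1) * M + m) = q m"
proof -
  obtain a where alpha: "alpha = Suc a"
    using polar by (cases alpha) (auto simp: polar_grid_data_def)
  have "r0 > 0" "rr (alpha - 1) = r0"
    using polar by (auto simp: polar_grid_data_def)
  then show "(alpha - 1) * M + m < M * alpha" "grid_point M r0 rr q ((alpha - 1) * M + m) = q m"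
    using assms by (auto simp: grid_point_def alpha)
qed

lemma T_exact_k_rotation_matrix: "A \<in> T_exact_k M alpha r0 rr q \<Longrightarrow> rotation_matrix A"
  by (simp add: T_exact_k_def rotation_iff_rotation_matrix)

lemma T_exact_k_transpose:
  assumes A: "A \<in> T_exact_k M alpha r0 rr q"
  shows "transpose A \<in> T_exact_k M alpha r0 rr q"
proof -
  let ?G = "grid M alpha r0 rr q"
  have "transpose A ** A = mat 1"
    using T_exact_k_rotation_matrix[OF A] by (simp add: rotation_matrix_def orthogonal_matrix)
  then have "(\<lambda>x. transpose A *v x) ` (\<lambda>x. A *v x) ` ?G = ?G"
    unfolding image_image matrix_vector_mul_assoc by simp
  then have "(\<lambda>x. transpose A *v x) ` ?G = ?G"
    using A by (simp add: T_exact_k_def)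
  then show ?thesis
    using T_exact_k_rotation_matrix[OF A]
    by (simp add: T_exact_k_def rotation_iff_rotation_matrix rotation_matrix_transpose)
qed

text \<open>Rotations preserve norms, and the outer shell is the part of the grid of norm r0.\<close>

lemma T_exact_k_maps_outer_shell:
  assumes A: "A \<in> T_exact_k M alpha r0 rr q" and "m < M"
  shows "A *v q m \<in> q ` {..<M}"
proof -
  have "q m \<in> grid M alpha r0 rr q"
    using grid_point_outer_shell[OF \<open>m < M\<close>] unfolding grid_def by (metis image_eqI lessThan_iff)
  then have "A *v q m \<in> grid M alpha r0 rr q"
    using A by (auto simp: T_exact_k_def)
  then obtain j where j: "j < M * alpha" "A *v q m = grid_point M r0 rr q j"
    unfolding grid_def by auto
  have "rr (j div M) = norm (A *v q m)"
    using norm_grid_point[OF j(1)] j(2) by simp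
  also have "\<dots> = rr (alpha - 1)"
    using T_exact_k_rotation_matrix[OF A] polar \<open>m < M\<close>
    by (simp add: rotation_matrix_def orthogonal_matrix_norm polar_grid_data_def)
  finally have "j div M = alpha - 1"
    using polar_grid_radius_eq_iff grid_index_bounds(1)[OF j(1)] polar
    by (simp add: polar_grid_data_def)
  then have "grid_point M r0 rr q j = q (j mod M)"
    using polar by (simp add: grid_point_def polar_grid_data_def)
  then show ?thesis
    using j grid_index_bounds(2)[OF j(1)] by auto
qed

lemma card_T_exact_k_le:
  "finite (T_exact_k M alpha r0 rr q)" "card (T_exact_k M alpha r0 rr q) \<le> M ^ (CARD('n) - 1)"
proof -
  obtain S where S: "S \<subseteq> q ` {..<M}" "independent S" "card S = CARD('n) - 1"
    using polar unfolding polar_grid_data_def by blast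
  have inj: "inj_on (\<lambda>A. restrict ((*v) A) S) (T_exact_k M alpha r0 rr q)"
  proof (rule inj_onI)
    fix A B assume "A \<in> T_exact_k M alpha r0 rr q" "B \<in> T_exact_k M alpha r0 rr q"
      and "restrict ((*v) A) S = restrict ((*v) B) S"
    then show "A = B"
      using rotation_matrix_eq_on_independent[OF _ _ S(2,3)] T_exact_k_rotation_matrix
      by (metis restrict_apply')
  qed
  have into: "A *v s \<in> q ` {..<M}" if "A \<in> T_exact_k M alpha r0 rr q" "s \<in> S" for A s
    using S(1) T_exact_k_maps_outer_shell that by blast
  have "card (q ` {..<M}) = M"
    using polar by (simp add: polar_grid_data_def card_image)
  then show "finite (T_exact_k M alpha r0 rr q)"
    and "card (T_exact_k M alpha r0 rr q) \<le> M ^ (CARD('n) - 1)"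
    using card_le_power_if_inj_on_restrict[OF inj finite_subset[OF S(1)] _ into] S(3) by simp_all
qed

lemma companion_eq_transpose:
  assumes "A \<in> T_exact_k M alpha r0 rr q"
  shows "companion M r0 rr q (M * alpha) A =
    (\<lambda>a b. if a < M * alpha \<and> b < M * alpha \<and>
        grid_point M r0 rr q b = transpose A *v grid_point M r0 rr q a then 1 else 0)"
  using T_exact_k_rotation_matrix[OF assms]
  by (simp add: companion_def rotation_matrix_def matrix_inv_orthogonal)

lemma companion_permutation_matrix:
  assumes "A \<in> T_exact_k M alpha r0 rr q"
  shows "permutation_matrix (M * alpha) (companion M r0 rr q (M * alpha) A)"
  unfolding companion_eq_transpose[OF assms]
  using T_exact_k_transpose[OF assms] inj_on_grid_point
  by (intro permutation_matrix_of_bijection_on_image) (simp_all add: T_exact_k_def grid_def)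

text \<open>On the outer shell the companion matrix of A records the action of transpose A, and a
  rotation is determined there.\<close>

lemma inj_on_companion: "inj_on (companion M r0 rr q (M * alpha)) (T_exact_k M alpha r0 rr q)"
proof (rule inj_onI)
  fix A B assume A: "A \<in> T_exact_k M alpha r0 rr q" and B: "B \<in> T_exact_k M alpha r0 rr q"
    and eq: "companion M r0 rr q (M * alpha) A = companion M r0 rr q (M * alpha) B"
  obtain S where S: "S \<subseteq> q ` {..<M}" "independent S" "card S = CARD('n) - 1"
    using polar unfolding polar_grid_data_def by blast
  have "transpose A *v q m = transpose B *v q m" if "m < M" for m
  proof -
    let ?a = "(alpha - 1) * M + m"
    have "transpose A *v grid_point M r0 rr q ?a \<in> grid M alpha r0 rr q"
      using T_exact_k_transpose[OF A] grid_point_outer_shell(1)[OF that]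
      by (auto simp: T_exact_k_def grid_def)
    then obtain b where "b < M * alpha"
      and A_b: "grid_point M r0 rr q b = transpose A *v grid_point M r0 rr q ?a"
      unfolding grid_def by auto
    then have "grid_point M r0 rr q b = transpose B *v grid_point M r0 rr q ?a"
      using fun_cong[OF fun_cong[OF eq, of ?a], of b] grid_point_outer_shell(1)[OF that]
      by (simp add: companion_eq_transpose[OF A] companion_eq_transpose[OF B] split: if_splits)
    then show ?thesis
      using A_b grid_point_outer_shell(2)[OF that] by simp
  qed
  then have "transpose A = transpose B"
    using rotation_matrix_eq_on_independent[OF _ _ S(2,3)] S(1) A B
      rotation_matrix_transpose T_exact_k_rotation_matrix by blast
  then show "A = B"
    by (metis transpose_transpose)
qed

end

theorem propositionA1:
  assumes "CARD('n) \<ge> 2"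
  shows "\<exists>C::real. \<forall>M alpha r0 rr (q :: nat \<Rightarrow> real^'n).
           polar_grid_data M alpha r0 rr q \<longrightarrow>
             finite (T_exact_k M alpha r0 rr q) \<and>
             card (T_exact_k M alpha r0 rr q) = card (T_exact M alpha r0 rr q) \<and>
             real (card (T_exact M alpha r0 rr q)) \<le> C * real (M * alpha) ^ (CARD('n) - 1) \<and>
             (\<forall>P \<in> T_exact M alpha r0 rr q.
                permutation_matrix (M * alpha) P \<and> orthogonal_mat (M * alpha) P)"
proof (intro exI[of _ 1] allI impI conjI)
  fix M alpha r0 rr and q :: "nat \<Rightarrow> real^'n"
  assume polar: "polar_grid_data M alpha r0 rr q"
  show "finite (T_exact_k M alpha r0 rr q)"
    using card_T_exact_k_le[OF polar] by blast
  show card_eq: "card (T_exact_k M alpha r0 rr q) = card (T_exact M alpha r0 rr q)"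
    unfolding T_exact_def using inj_on_companion[OF polar] by (simp add: card_image)
  have "M \<le> M * alpha"
    using polar by (simp add: polar_grid_data_def)
  then have "real M \<le> real (M * alpha)"
    by (simp only: of_nat_le_iff)
  then have "real M ^ (CARD('n) - 1) \<le> 1 * real (M * alpha) ^ (CARD('n) - 1)"
    by (simp add: power_mono del: of_nat_mult)
  then show "real (card (T_exact M alpha r0 rr q)) \<le> 1 * real (M * alpha) ^ (CARD('n) - 1)"
    using card_T_exact_k_le(2)[OF polar] card_eq
    by (metis (mono_tags, lifting) of_nat_le_iff of_nat_power order_trans)
  show "\<forall>P \<in> T_exact M alpha r0 rr q. permutation_matrix (M * alpha) P \<and> orthogonal_mat (M * alpha) P"
    unfolding T_exact_def
    using companion_permutation_matrix[OF polar] permutation_matrix_orthogonal by blast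
qed

end
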